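(* Let $(S_n)_{n\ge0}$ be a random walk on $\mathbb R$ with i.i.d. increments, $S_0=0$, $\mathbb E[S_1]>0$ and $\mathbb E[(S_1^+)^2]<\infty$, and let $\tau(t)=\inf\{n\ge0:S_n>t\}$ for $t\ge0$. Then for every $0<a<1$, $t\,\mathbb P(S_{\tau(t)-1}<at)\to0$ as $t\to\infty$. *)

theory Defs
  imports "HOL-Probability.Probability"
begin

definition rw :: "(nat \<Rightarrow> 'a \<Rightarrow> real) \<Rightarrow> nat \<Rightarrow> 'a \<Rightarrow> real" where
  "rw X n \<omega> = (\<Sum>i<n. X i \<omega>)"

(* first passage time tau(t) = inf {n >= 0. S_n > t} (arbitrary value if the set is empty,
   which happens only on a null set under the theorem's hypotheses) *)
definition passage :: "(nat \<Rightarrow> 'a \<Rightarrow> real) \<Rightarrow> real \<Rightarrow> 'a \<Rightarrow> nat" where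
  "passage X t \<omega> = (LEAST n. rw X n \<omega> > t)"

end

theory Submission
  imports Defs
begin

(* Fix a truncation level L with mu = E[min(S_1, L)] > 0 and write T = tau(t). The truncated
   increments X_0, ..., X_(T-1) add up to at most t + L, so Wald's argument gives
   E[T] = sum_n P(T > n) <= (t + L) / mu. If S_(T-1) < a t, the step from S_(T-1) to S_T > t
   exceeds (1 - a) t; as {T > n} is independent of the increment X_n, a union bound over n gives
   P(S_(T-1) < a t) <= E[T] P(S_1 > (1 - a) t). Since E[(S_1^+)^2] is finite,
   t^2 P(S_1 > (1 - a) t) -> 0, and hence t P(S_(T-1) < a t) -> 0. *)

lemma rw_0 [simp]: "rw X 0 \<omega> = 0"
  by (simp add: rw_def)

lemma rw_Suc: "rw X (Suc n) \<omega> = rw X n \<omega> + X n \<omega>"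
  by (simp add: rw_def)

lemma sum_truncated_steps_before_exit_le:
  fixes x :: "nat \<Rightarrow> real"
  assumes "0 \<le> t" "0 \<le> L"
  shows "(\<Sum>k<N. of_bool (\<forall>j\<le>k. (\<Sum>i<j. x i) \<le> t) * min (x k) L) \<le> t + L"
proof -
  let ?stay = "\<lambda>k. \<forall>j\<le>k. (\<Sum>i<j. x i) \<le> t"
  \<comment> \<open>Before the exit the truncated steps are dominated by the steps themselves; the exit step
    adds at most L on top of a partial sum \<open>\<le> t\<close>.\<close>
  have "(\<Sum>k<N. of_bool (?stay k) * min (x k) L) \<le> (if ?stay N then (\<Sum>i<N. x i) else t + L)"
  proof (induction N)
    case 0
    show ?case using assms by simp
  next
    case (Suc N)
    have stay_Suc: "?stay (Suc N) \<longleftrightarrow> ?stay N \<and> (\<Sum>i<Suc N. x i) \<le> t"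
      by (auto simp: le_Suc_eq)
    show ?case
    proof (cases "?stay N")
      case True
      with Suc.IH have IH: "(\<Sum>k<N. of_bool (?stay k) * min (x k) L) \<le> (\<Sum>i<N. x i)"
        by simp
      have step: "(\<Sum>k<Suc N. of_bool (?stay k) * min (x k) L)
          = (\<Sum>k<N. of_bool (?stay k) * min (x k) L) + min (x N) L"
        using True by simp
      have "(\<Sum>i<N. x i) \<le> t" "min (x N) L \<le> x N" "min (x N) L \<le> L"
        using True by auto
      with IH have "(\<Sum>k<Suc N. of_bool (?stay k) * min (x k) L) \<le> (\<Sum>i<Suc N. x i)"
        and "(\<Sum>k<Suc N. of_bool (?stay k) * min (x k) L) \<le> t + L"
        unfolding step by simp_all
      then show ?thesis
        by (simp only: if_split) blast
    next
      case False
      then have "\<not> ?stay (Suc N)"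
        by (simp add: stay_Suc)
      moreover have "(\<Sum>k<Suc N. of_bool (?stay k) * min (x k) L) = (\<Sum>k<N. of_bool (?stay k) * min (x k) L)"
        using False by simp
      ultimately show ?thesis
        using Suc.IH by (simp only: if_not_P[OF False] if_False)
    qed
  qed
  also have "\<dots> \<le> t + L"
    using assms by auto
  finally show ?thesis .
qed

lemma truncated_integral_pos:
  fixes f :: "'a \<Rightarrow> real"
  assumes "integrable M f" and "integral\<^sup>L M f > 0"
  obtains L where "0 \<le> L" and "(\<integral>x. min (f x) L \<partial>M) > 0"
proof -
  have "(\<lambda>n. \<integral>x. min (f x) (real n) \<partial>M) \<longlonglongrightarrow> integral\<^sup>L M f"
  proof (rule integral_dominated_convergence[where w="\<lambda>x. \<bar>f x\<bar>"])
    show "AE x in M. (\<lambda>n. min (f x) (real n)) \<longlonglongrightarrow> f x"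
    proof (rule AE_I2, rule tendsto_eventually)
      fix x
      obtain n :: nat where "f x \<le> real n"
        using real_arch_simple by blast
      then show "\<forall>\<^sub>F n in sequentially. min (f x) (real n) = f x"
        unfolding eventually_sequentially by (intro exI[of _ n]) auto
    qed
  qed (use assms in auto)
  then have "\<forall>\<^sub>F n in sequentially. (\<integral>x. min (f x) (real n) \<partial>M) > 0"
    using assms(2) by (rule order_tendstoD)
  then obtain n where "(\<integral>x. min (f x) (real n) \<partial>M) > 0"
    by (auto simp: eventually_sequentially)
  then show thesis
    by (intro that[of "real n"]) auto
qed

lemma (in finite_measure) tendsto_sq_mult_measure_gt:
  fixes f :: "'a \<Rightarrow> real"
  assumes [measurable]: "f \<in> borel_measurable M"
    and int: "integrable M (\<lambda>x. (max 0 (f x))\<^sup>2)" and "0 < c"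
  shows "((\<lambda>t. t\<^sup>2 * measure M {x\<in>space M. f x > c * t}) \<longlongrightarrow> 0) at_top"
proof -
  define g where "g t = (\<integral>x. (max 0 (f x))\<^sup>2 * indicator {c * t<..} (f x) \<partial>M)" for t
  have integrable_g: "integrable M (\<lambda>x. (max 0 (f x))\<^sup>2 * indicator {c * t<..} (f x))" for t
    by (rule Bochner_Integration.integrable_bound[OF int]) (auto simp: indicator_def)
  have "(g \<longlongrightarrow> (\<integral>x. 0 \<partial>M)) at_top"
    unfolding g_def
  proof (rule integral_dominated_convergence_at_top[where w="\<lambda>x. (max 0 (f x))\<^sup>2"])
    show "AE x in M. ((\<lambda>t. (max 0 (f x))\<^sup>2 * indicator {c * t<..} (f x)) \<longlongrightarrow> 0) at_top"
    proof (rule AE_I2, rule tendsto_eventually)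
      fix x
      show "\<forall>\<^sub>F t in at_top. (max 0 (f x))\<^sup>2 * indicator {c * t<..} (f x) = (0::real)"
        using eventually_ge_at_top[of "f x / c"]
      proof eventually_elim
        case (elim t)
        then have "f x \<le> c * t"
          using \<open>0 < c\<close> by (simp add: divide_le_eq mult.commute)
        then show ?case
          by (simp add: indicator_def)
      qed
    qed
    show "\<forall>\<^sub>F t in at_top. AE x in M. norm ((max 0 (f x))\<^sup>2 * indicator {c * t<..} (f x)) \<le> (max 0 (f x))\<^sup>2"
      by (intro always_eventually allI AE_I2) (auto simp: indicator_def)
  qed (use int in auto)
  then have lim: "((\<lambda>t. g t / c\<^sup>2) \<longlongrightarrow> 0) at_top"
    by (intro tendsto_divide_zero) simp
  have bound: "t\<^sup>2 * measure M {x\<in>space M. f x > c * t} \<le> g t / c\<^sup>2" if "0 \<le> t" for t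
  proof -
    \<comment> \<open>Markov's inequality for \<open>(f\<^sup>+)\<^sup>2\<close> on the tail event.\<close>
    have "c\<^sup>2 * (t\<^sup>2 * measure M {x\<in>space M. f x > c * t})
        = (\<integral>x. (c * t)\<^sup>2 * indicator {x\<in>space M. f x > c * t} x \<partial>M)"
      by (simp add: power_mult_distrib)
    also have "\<dots> \<le> g t"
      unfolding g_def
    proof (rule integral_mono[OF _ integrable_g])
      show "integrable M (\<lambda>x. (c * t)\<^sup>2 * indicator {x\<in>space M. f x > c * t} x)"
        by (intro integrable_mult_right integrable_real_indicator) (auto simp: less_top[symmetric])
      fix x
      assume "x \<in> space M"
      moreover have "(c * t)\<^sup>2 \<le> (max 0 (f x))\<^sup>2" if "f x > c * t"
        using that \<open>0 < c\<close> \<open>0 \<le> t\<close> by (intro power_mono) auto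
      ultimately show "(c * t)\<^sup>2 * indicator {x\<in>space M. f x > c * t} x
          \<le> (max 0 (f x))\<^sup>2 * indicator {c * t<..} (f x)"
        by (auto simp: indicator_def)
    qed
    finally show ?thesis
      using \<open>0 < c\<close> by (simp add: le_divide_eq mult.commute)
  qed
  show ?thesis
  proof (rule tendsto_sandwich[OF _ _ tendsto_const lim])
    show "\<forall>\<^sub>F t in at_top. 0 \<le> t\<^sup>2 * measure M {x\<in>space M. f x > c * t}"
      by simp
    show "\<forall>\<^sub>F t in at_top. t\<^sup>2 * measure M {x\<in>space M. f x > c * t} \<le> g t / c\<^sup>2"
      using eventually_ge_at_top[of 0] by eventually_elim (rule bound)
  qed
qed

locale iid_random_walk = prob_space M for M :: "'a measure" +
  fixes X :: "nat \<Rightarrow> 'a \<Rightarrow> real"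
  assumes measurable_step [measurable]: "\<And>i. X i \<in> borel_measurable M"
    and indep_steps: "indep_vars (\<lambda>_. borel) X UNIV"
    and distr_step: "\<And>i. distr M borel (X i) = distr M borel (X 0)"
begin

lemma borel_measurable_rw [measurable]: "rw X n \<in> borel_measurable M"
  unfolding rw_def by measurable

lemma integral_step:
  fixes \<phi> :: "real \<Rightarrow> real"
  assumes "\<phi> \<in> borel_measurable borel"
  shows "(\<integral>\<omega>. \<phi> (X k \<omega>) \<partial>M) = (\<integral>\<omega>. \<phi> (X 0 \<omega>) \<partial>M)"
proof -
  have "(\<integral>\<omega>. \<phi> (X k \<omega>) \<partial>M) = integral\<^sup>L (distr M borel (X k)) \<phi>"
    using integral_distr[OF measurable_step[of k] assms] by simp
  also have "\<dots> = integral\<^sup>L (distr M borel (X 0)) \<phi>"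
    by (simp only: distr_step[of k])
  also have "\<dots> = (\<integral>\<omega>. \<phi> (X 0 \<omega>) \<partial>M)"
    using integral_distr[OF measurable_step[of 0] assms] by simp
  finally show ?thesis .
qed

lemma integrable_step:
  fixes \<phi> :: "real \<Rightarrow> real"
  assumes "\<phi> \<in> borel_measurable borel" and "integrable M (\<lambda>\<omega>. \<phi> (X 0 \<omega>))"
  shows "integrable M (\<lambda>\<omega>. \<phi> (X k \<omega>))"
proof -
  have "integrable (distr M borel (X 0)) \<phi>"
    using assms integrable_distr_eq[OF measurable_step[of 0] assms(1)] by simp
  then have "integrable (distr M borel (X k)) \<phi>"
    by (simp only: distr_step[of k])
  then show ?thesis
    using integrable_distr_eq[OF measurable_step[of k] assms(1)] by simp
qed

lemma indep_var_past_step: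
  assumes "g \<in> borel_measurable (PiM {..<k} (\<lambda>_. borel))" and "h \<in> borel_measurable borel"
  shows "indep_var borel (\<lambda>\<omega>. g (\<lambda>i\<in>{..<k}. X i \<omega>)) borel (\<lambda>\<omega>. h (X k \<omega>))"
proof -
  have "indep_var borel (g \<circ> (\<lambda>\<omega>. \<lambda>i\<in>{..<k}. X i \<omega>)) borel ((\<lambda>f. h (f k)) \<circ> (\<lambda>\<omega>. \<lambda>i\<in>{k}. X i \<omega>))"
    using assms by (intro indep_var_compose[OF indep_var_restrict[OF indep_steps]]) auto
  then show ?thesis
    by (simp add: comp_def)
qed

(* stays_below t k is the event tau(t) > k. *)

definition stays_below :: "real \<Rightarrow> nat \<Rightarrow> 'a set" where
  "stays_below t k = {\<omega>\<in>space M. \<forall>j\<le>k. rw X j \<omega> \<le> t}"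

lemma sets_stays_below [measurable]: "stays_below t k \<in> sets M"
  unfolding stays_below_def by measurable

lemma indep_var_stays_below_step:
  assumes "h \<in> borel_measurable borel"
  shows "indep_var borel (\<lambda>\<omega>. of_bool (\<forall>j\<le>k. rw X j \<omega> \<le> t) :: real) borel (\<lambda>\<omega>. h (X k \<omega>))"
proof -
  let ?g = "\<lambda>f. of_bool (\<forall>j\<in>{..k}. (\<Sum>i<j. f i) \<le> t) :: real"
  have "{f \<in> space (PiM {..<k} (\<lambda>_. borel)). \<forall>j\<in>{..k}. (\<Sum>i<j. f i) \<le> t}
      \<in> sets (PiM {..<k} (\<lambda>_. borel :: real measure))"
    by (intro sets.sets_Collect_finite_All') (auto intro!: measurable_component_singleton)
  then have "?g \<in> borel_measurable (PiM {..<k} (\<lambda>_. borel))"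
    unfolding of_bool_def by (intro measurable_If) auto
  from indep_var_past_step[OF this assms] show ?thesis
    by (simp add: rw_def Ball_def)
qed

lemma integral_stays_below_mult_step:
  fixes \<phi> :: "real \<Rightarrow> real"
  assumes [measurable]: "\<phi> \<in> borel_measurable borel" and "integrable M (\<lambda>\<omega>. \<phi> (X 0 \<omega>))"
  shows "integrable M (\<lambda>\<omega>. indicator (stays_below t k) \<omega> * \<phi> (X k \<omega>))"
    and "(\<integral>\<omega>. indicator (stays_below t k) \<omega> * \<phi> (X k \<omega>) \<partial>M)
           = prob (stays_below t k) * (\<integral>\<omega>. \<phi> (X 0 \<omega>) \<partial>M)"
proof -
  let ?B = "\<lambda>\<omega>. of_bool (\<forall>j\<le>k. rw X j \<omega> \<le> t) :: real"
  note indep = indep_var_stays_below_step[OF assms(1), of k t]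
  have "?B \<in> borel_measurable M"
    unfolding of_bool_def by measurable
  then have int_B: "integrable M ?B"
    by (rule integrable_const_bound[where B=1, rotated]) simp
  note int_\<phi> = integrable_step[OF assms]
  have B_eq: "indicator (stays_below t k) \<omega> = ?B \<omega>" if "\<omega> \<in> space M" for \<omega>
    using that by (simp add: stays_below_def indicator_def)
  have int_B\<phi>: "integrable M (\<lambda>\<omega>. ?B \<omega> * \<phi> (X k \<omega>))"
    by (rule indep_var_integrable[OF indep int_B int_\<phi>])
  show "integrable M (\<lambda>\<omega>. indicator (stays_below t k) \<omega> * \<phi> (X k \<omega>))"
    by (rule Bochner_Integration.integrable_cong[OF refl, THEN iffD2, OF _ int_B\<phi>]) (simp add: B_eq)
  have "(\<integral>\<omega>. indicator (stays_below t k) \<omega> * \<phi> (X k \<omega>) \<partial>M) = (\<integral>\<omega>. ?B \<omega> * \<phi> (X k \<omega>) \<partial>M)"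
    by (rule Bochner_Integration.integral_cong) (simp_all add: B_eq)
  also have "\<dots> = (\<integral>\<omega>. ?B \<omega> \<partial>M) * (\<integral>\<omega>. \<phi> (X 0 \<omega>) \<partial>M)"
    using indep_var_lebesgue_integral[OF indep int_B int_\<phi>]
    by (simp add: integral_step[OF assms(1), of k])
  also have "(\<integral>\<omega>. ?B \<omega> \<partial>M) = (\<integral>\<omega>. indicator (stays_below t k) \<omega> \<partial>M)"
    by (rule Bochner_Integration.integral_cong) (simp_all add: B_eq)
  finally show "(\<integral>\<omega>. indicator (stays_below t k) \<omega> * \<phi> (X k \<omega>) \<partial>M)
      = prob (stays_below t k) * (\<integral>\<omega>. \<phi> (X 0 \<omega>) \<partial>M)"
    by simp
qed

lemma prob_stays_below_inter_step_gt:
  "prob (stays_below t k \<inter> {\<omega>\<in>space M. X k \<omega> > s})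
     = prob (stays_below t k) * prob {\<omega>\<in>space M. X 0 \<omega> > s}"
proof -
  let ?I = "indicator {s<..} :: real \<Rightarrow> real"
  have int: "integrable M (\<lambda>\<omega>. ?I (X 0 \<omega>))"
    by (rule integrable_const_bound[where B=1]) auto
  have "prob (stays_below t k \<inter> {\<omega>\<in>space M. X k \<omega> > s})
      = (\<integral>\<omega>. indicator (stays_below t k \<inter> {\<omega>\<in>space M. X k \<omega> > s}) \<omega> \<partial>M)"
    by simp
  also have "\<dots> = (\<integral>\<omega>. indicator (stays_below t k) \<omega> * ?I (X k \<omega>) \<partial>M)"
    by (rule Bochner_Integration.integral_cong) (auto simp: indicator_def)
  also have "\<dots> = prob (stays_below t k) * (\<integral>\<omega>. ?I (X 0 \<omega>) \<partial>M)"
    by (rule integral_stays_below_mult_step(2)[OF _ int]) simp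
  also have "(\<integral>\<omega>. ?I (X 0 \<omega>) \<partial>M) = (\<integral>\<omega>. indicator {\<omega>\<in>space M. X 0 \<omega> > s} \<omega> \<partial>M)"
    by (rule Bochner_Integration.integral_cong) (auto simp: indicator_def)
  also have "\<dots> = prob {\<omega>\<in>space M. X 0 \<omega> > s}"
    by simp
  finally show ?thesis .
qed

lemma sum_prob_stays_below_mult_le:
  assumes "0 \<le> t" "0 \<le> L" and int: "integrable M (X 0)"
  shows "(\<Sum>k<N. prob (stays_below t k)) * (\<integral>\<omega>. min (X 0 \<omega>) L \<partial>M) \<le> t + L"
proof -
  have min_measurable: "(\<lambda>x. min x L) \<in> borel_measurable borel"
    by measurable
  have int_min: "integrable M (\<lambda>\<omega>. min (X 0 \<omega>) L)"
    by (rule Bochner_Integration.integrable_bound[where f="\<lambda>\<omega>. \<bar>X 0 \<omega>\<bar> + L"])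
       (use int assms in auto)
  note wald = integral_stays_below_mult_step[OF min_measurable int_min]
  have "(\<Sum>k<N. prob (stays_below t k)) * (\<integral>\<omega>. min (X 0 \<omega>) L \<partial>M)
      = (\<Sum>k<N. \<integral>\<omega>. indicator (stays_below t k) \<omega> * min (X k \<omega>) L \<partial>M)"
    by (simp add: sum_distrib_right wald)
  also have "\<dots> = (\<integral>\<omega>. (\<Sum>k<N. indicator (stays_below t k) \<omega> * min (X k \<omega>) L) \<partial>M)"
    by (rule Bochner_Integration.integral_sum[symmetric]) (use wald in auto)
  also have "\<dots> \<le> (\<integral>\<omega>. t + L \<partial>M)"
  proof (rule integral_mono)
    show "integrable M (\<lambda>\<omega>. \<Sum>k<N. indicator (stays_below t k) \<omega> * min (X k \<omega>) L)"
      by (rule Bochner_Integration.integrable_sum) (rule wald)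
  next
    fix \<omega>
    assume "\<omega> \<in> space M"
    then show "(\<Sum>k<N. indicator (stays_below t k) \<omega> * min (X k \<omega>) L) \<le> t + L"
      using sum_truncated_steps_before_exit_le[OF assms(1,2), where N=N and x="\<lambda>i. X i \<omega>"]
      by (simp add: stays_below_def indicator_def rw_def)
  qed simp
  also have "\<dots> = t + L"
    by (simp add: prob_space)
  finally show ?thesis .
qed

lemma suminf_prob_stays_below_le:
  assumes "0 \<le> t" "0 \<le> L" and "integrable M (X 0)" and \<mu>: "(\<integral>\<omega>. min (X 0 \<omega>) L \<partial>M) > 0"
  shows "summable (\<lambda>k. prob (stays_below t k))"
    and "(\<Sum>k. prob (stays_below t k)) \<le> (t + L) / (\<integral>\<omega>. min (X 0 \<omega>) L \<partial>M)"
proof -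
  have partial: "(\<Sum>k<N. prob (stays_below t k)) \<le> (t + L) / (\<integral>\<omega>. min (X 0 \<omega>) L \<partial>M)" for N
    using sum_prob_stays_below_mult_le[OF assms(1-3), of N] \<mu> by (simp add: pos_le_divide_eq)
  show summable: "summable (\<lambda>k. prob (stays_below t k))"
    by (rule summableI_nonneg_bounded[OF _ partial]) auto
  show "(\<Sum>k. prob (stays_below t k)) \<le> (t + L) / (\<integral>\<omega>. min (X 0 \<omega>) L \<partial>M)"
    by (rule suminf_le_const[OF summable partial])
qed

(* On the event that the walk never exceeds t, passage is the junk value LEAST of an empty set;
   this event is the intersection, which is null by summability of P(T > k). *)
lemma undershoot_subset:
  assumes "0 \<le> t"
  shows "{\<omega>\<in>space M. rw X (passage X t \<omega> - 1) \<omega> < s}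
    \<subseteq> (\<Inter>k. stays_below t k) \<union> (\<Union>n. stays_below t n \<inter> {\<omega>\<in>space M. X n \<omega> > t - s})"
proof clarify
  fix \<omega>
  assume \<omega>: "\<omega> \<in> space M" and undershoot: "rw X (passage X t \<omega> - 1) \<omega> < s"
    and not_stays: "\<omega> \<notin> (\<Union>n. stays_below t n \<inter> {\<omega>\<in>space M. X n \<omega> > t - s})"
  show "\<omega> \<in> stays_below t k" for k
  proof (rule ccontr)
    assume "\<omega> \<notin> stays_below t k"
    then have exits: "\<exists>n. rw X n \<omega> > t"
      using \<omega> by (auto simp: stays_below_def not_le)
    define T where "T = passage X t \<omega>"
    have "rw X T \<omega> > t"
      unfolding T_def passage_def using exits by (rule LeastI_ex)
    moreover have below: "rw X j \<omega> \<le> t" if "j < T" for j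
      using that not_less_Least unfolding T_def passage_def by (blast intro: leI)
    ultimately obtain n where n: "T = Suc n"
      using \<open>0 \<le> t\<close> by (cases T) auto
    have "\<omega> \<in> stays_below t n"
      using \<omega> below n by (auto simp: stays_below_def)
    moreover have "X n \<omega> > t - s"
      using \<open>rw X T \<omega> > t\<close> undershoot n by (simp add: T_def rw_Suc)
    ultimately show False
      using \<omega> not_stays by auto
  qed
qed

lemma prob_undershoot_le_suminf:
  assumes "0 \<le> t" and summable: "summable (\<lambda>k. prob (stays_below t k))"
  shows "prob {\<omega>\<in>space M. rw X (passage X t \<omega> - 1) \<omega> < s}
    \<le> (\<Sum>k. prob (stays_below t k)) * prob {\<omega>\<in>space M. X 0 \<omega> > t - s}"
proof -
  let ?q = "prob {\<omega>\<in>space M. X 0 \<omega> > t - s}"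
  let ?C = "\<lambda>n. stays_below t n \<inter> {\<omega>\<in>space M. X n \<omega> > t - s}"
  have prob_C: "prob (?C n) = prob (stays_below t n) * ?q" for n
    by (rule prob_stays_below_inter_step_gt)
  have "prob (\<Inter>k. stays_below t k) \<le> 0"
  proof (rule LIMSEQ_le_const[OF summable_LIMSEQ_zero[OF summable]])
    show "\<exists>N. \<forall>k\<ge>N. prob (\<Inter>k. stays_below t k) \<le> prob (stays_below t k)"
      by (auto intro!: finite_measure_mono)
  qed
  then have null: "prob (\<Inter>k. stays_below t k) = 0"
    using measure_nonneg[of M "\<Inter>k. stays_below t k"] by linarith
  have "prob {\<omega>\<in>space M. rw X (passage X t \<omega> - 1) \<omega> < s}
      \<le> prob ((\<Inter>k. stays_below t k) \<union> (\<Union>n. ?C n))"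
    by (rule finite_measure_mono[OF undershoot_subset[OF assms(1)]]) auto
  also have "\<dots> \<le> prob (\<Inter>k. stays_below t k) + prob (\<Union>n. ?C n)"
    by (rule measure_Un_le) auto
  also have "\<dots> = prob (\<Union>n. ?C n)"
    by (simp add: null)
  also have "\<dots> \<le> (\<Sum>n. prob (?C n))"
    by (rule finite_measure_subadditive_countably) (auto simp: prob_C intro: summable_mult2 summable)
  also have "\<dots> = (\<Sum>k. prob (stays_below t k)) * ?q"
    unfolding prob_C by (rule suminf_mult2[OF summable, symmetric])
  finally show ?thesis .
qed

lemma prob_undershoot_le:
  assumes "0 \<le> t" "0 \<le> L" and "integrable M (X 0)" and "(\<integral>\<omega>. min (X 0 \<omega>) L \<partial>M) > 0"
  shows "prob {\<omega>\<in>space M. rw X (passage X t \<omega> - 1) \<omega> < s}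
    \<le> (t + L) / (\<integral>\<omega>. min (X 0 \<omega>) L \<partial>M) * prob {\<omega>\<in>space M. X 0 \<omega> > t - s}"
proof -
  note expected_passage = suminf_prob_stays_below_le[OF assms]
  show ?thesis
    using prob_undershoot_le_suminf[OF assms(1) expected_passage(1)]
      mult_right_mono[OF expected_passage(2) measure_nonneg]
    by (rule order_trans)
qed

end

theorem mainTheorem15:
  fixes M :: "'a measure" and X :: "nat \<Rightarrow> 'a \<Rightarrow> real" and a :: real
  assumes "prob_space M"
    and "\<And>i. X i \<in> borel_measurable M"
    and "prob_space.indep_vars M (\<lambda>_. borel) X UNIV"
    and "\<And>i. distr M borel (X i) = distr M borel (X 0)"
    and "integrable M (X 0)"
    and "prob_space.expectation M (X 0) > 0"
    and "integrable M (\<lambda>\<omega>. (max 0 (X 0 \<omega>))\<^sup>2)"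
    and "0 < a" and "a < 1"
  shows "((\<lambda>t. t * measure M {\<omega> \<in> space M. rw X (passage X t \<omega> - 1) \<omega> < a * t})
           \<longlongrightarrow> 0) at_top"
proof -
  interpret iid_random_walk M X
    using assms(1-4) unfolding iid_random_walk_def iid_random_walk_axioms_def by blast
  obtain L where "0 \<le> L" and \<mu>_pos: "(\<integral>\<omega>. min (X 0 \<omega>) L \<partial>M) > 0"
    using truncated_integral_pos[OF assms(5,6)] .
  define \<mu> where "\<mu> = (\<integral>\<omega>. min (X 0 \<omega>) L \<partial>M)"
  define q where "q t = prob {\<omega>\<in>space M. X 0 \<omega> > (1 - a) * t}" for t
  let ?U = "\<lambda>t. {\<omega>\<in>space M. rw X (passage X t \<omega> - 1) \<omega> < a * t}"
  have lim: "((\<lambda>t. (1 + L) / \<mu> * (t\<^sup>2 * q t)) \<longlongrightarrow> 0) at_top"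
    unfolding q_def using assms(7-9)
    by (intro tendsto_mult_right_zero tendsto_sq_mult_measure_gt) auto
  have bound: "t * prob (?U t) \<le> (1 + L) / \<mu> * (t\<^sup>2 * q t)" if "1 \<le> t" for t
  proof -
    have "L * 1 \<le> L * t"
      using that \<open>0 \<le> L\<close> by (intro mult_left_mono) auto
    then have "t + L \<le> (1 + L) * t"
      by (simp add: algebra_simps)
    have "prob (?U t) \<le> (t + L) / \<mu> * q t"
      using prob_undershoot_le[of t L "a * t"] that \<open>0 \<le> L\<close> assms(5) \<mu>_pos
      by (simp add: \<mu>_def q_def left_diff_distrib)
    also have "\<dots> \<le> (1 + L) * t / \<mu> * q t"
      using \<open>t + L \<le> (1 + L) * t\<close> \<mu>_pos
      by (intro mult_right_mono divide_right_mono) (simp_all add: \<mu>_def q_def)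
    finally have "t * prob (?U t) \<le> t * ((1 + L) * t / \<mu> * q t)"
      using that by (intro mult_left_mono) auto
    then show ?thesis
      by (simp add: power2_eq_square algebra_simps)
  qed
  show ?thesis
  proof (rule tendsto_sandwich[OF _ _ tendsto_const lim])
    show "\<forall>\<^sub>F t in at_top. 0 \<le> t * prob (?U t)"
      using eventually_ge_at_top[of 0] by eventually_elim simp
    show "\<forall>\<^sub>F t in at_top. t * prob (?U t) \<le> (1 + L) / \<mu> * (t\<^sup>2 * q t)"
      using eventually_ge_at_top[of 1] by eventually_elim (rule bound)
  qed
qed

end
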